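(* Fix $n\ge1$ and let $M$ be the unique solution of the model problem described in the context. Then $$\overline{M(\overline p)}=i^{\sigma_3}M(p)\,i^{-\sigma_3},\qquad \sigma_3=\begin{bmatrix}1&0\\0&-1\end{bmatrix},\ i^{\sigma_3}=\begin{bmatrix}i&0\\0&-i\end{bmatrix}.$$ In particular $\overline{M_{11}(\overline p)}=M_{11}(p)$, and for $p$ on the line $\{\mathrm{Im}\,p=\tfrac12\mathrm{Im}\,\tau\}$ one has $M_{12}(p_+)=M_{11}(p_-)=\overline{M_{11}(p_+)}$.
   Context: Let $\tau\in i\mathbb{R}_{>0}$, $\Lambda_\tau=\mathbb{Z}+\tau\mathbb{Z}$, and fix $\mathscr D\in(0,1)$. For $p$ on a line $\{\mathrm{Im}\,p=(k+\tfrac12)\mathrm{Im}\,\tau\}$, $p_\pm$ denote boundary values from above/below. Model problem (for given $n$): a $2\times2$ matrix-valued function $M$ on $\mathbb{C}\setminus\bigcup_{k\in\mathbb Z}\{\mathrm{Im}\,p=(k+\tfrac12)\mathrm{Im}\,\tau\}$, meromorphic there, such that: (1) $M(p+1)=(-1)^{n-1}M(p)$, $M(p+\tau)=M(p)$; (2) near $p\equiv0\bmod\Lambda_\tau$, $M(p)=\begin{bmatrix}p^{-1}+\mathcal O(1)&\mathcal O(1)\\\mathcal O(1)&p^{-1}+\mathcal O(1)\end{bmatrix}$; (3) near $p\equiv\mathscr D\bmod\Lambda_\tau$ the first column is $\mathcal O((p-\mathscr D)^{-1})$ and the second is $\mathcal O(p-\mathscr D)$; (4) no other poles; (5) continuous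 boundary values on the lines with $M(p_+)=M(p_-)\begin{bmatrix}0&1\\-1&0\end{bmatrix}$. This problem has a unique solution. *)

theory Defs
  imports "HOL-Analysis.Analysis"
begin

type_synonym cmat = "complex^2^2"

definition cut_lines :: "complex \<Rightarrow> complex set" where
  "cut_lines tau = {p. \<exists>k::int. Im p = (of_int k + 1/2) * Im tau}"

definition mp_domain :: "complex \<Rightarrow> complex set" where
  "mp_domain tau = - cut_lines tau"

definition lattice :: "complex \<Rightarrow> complex set" where
  "lattice tau = {of_int m + of_int k * tau | m k. True}"

definition pole_set :: "complex \<Rightarrow> real \<Rightarrow> complex set" where
  "pole_set tau D = lattice tau \<union> (\<lambda>z. of_real D + z) ` lattice tau"

definition bv_plus :: "(complex \<Rightarrow> cmat) \<Rightarrow> complex \<Rightarrow> cmat" where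
  "bv_plus M p = Lim (at p within {q. Im q > Im p}) M"

definition bv_minus :: "(complex \<Rightarrow> cmat) \<Rightarrow> complex \<Rightarrow> cmat" where
  "bv_minus M p = Lim (at p within {q. Im q < Im p}) M"

definition jump_J :: cmat where
  "jump_J = vector [vector [0, 1], vector [-1, 0]]"

definition i_sigma3 :: cmat where
  "i_sigma3 = vector [vector [\<i>, 0], vector [0, -\<i>]]"

definition i_minus_sigma3 :: cmat where
  "i_minus_sigma3 = vector [vector [-\<i>, 0], vector [0, \<i>]]"

definition model_solution :: "nat \<Rightarrow> complex \<Rightarrow> real \<Rightarrow> (complex \<Rightarrow> cmat) \<Rightarrow> bool" where
  "model_solution n tau D M \<longleftrightarrow>
     \<comment> \<open>meromorphic, with no poles other than those congruent to 0 or D (4)\<close>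
     (\<forall>i j. (\<lambda>p. M p $ i $ j) holomorphic_on (mp_domain tau - pole_set tau D)) \<and>
     \<comment> \<open>(1) quasi-periodicity\<close>
     (\<forall>p \<in> mp_domain tau. M (p + 1) = ((-1::real) ^ (n - 1)) *\<^sub>R M p \<and> M (p + tau) = M p) \<and>
     \<comment> \<open>(2) behaviour at 0\<close>
     (\<exists>C. \<forall>\<^sub>F p in at 0. norm ((\<chi> i j. M p $ i $ j - (if i = j then 1 / p else 0)) :: cmat) \<le> C) \<and>
     \<comment> \<open>(3) behaviour at D: first column O((p-D)^-1), second column O(p-D)\<close>
     (\<exists>C. \<forall>\<^sub>F p in at (of_real D). \<forall>i.
         norm ((p - of_real D) * M p $ i $ 1) \<le> C \<and> norm (M p $ i $ 2) \<le> C * norm (p - of_real D)) \<and>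
     \<comment> \<open>(5) continuous boundary values with jump M(p_+) = M(p_-) J\<close>
     (\<forall>p \<in> cut_lines tau.
         (M \<longlongrightarrow> bv_plus M p) (at p within {q. Im q > Im p}) \<and>
         (M \<longlongrightarrow> bv_minus M p) (at p within {q. Im q < Im p}) \<and>
         bv_plus M p = bv_minus M p ** jump_J) \<and>
     (\<forall>k::int. continuous_on {p. Im p = (of_int k + 1/2) * Im tau} (bv_plus M) \<and>
               continuous_on {p. Im p = (of_int k + 1/2) * Im tau} (bv_minus M))"

end

theory Submission
  imports Defs "HOL-Complex_Analysis.Conformal_Mappings"
begin

(* Conjugating a solution, M \<mapsto> i^-sigma3 conj (M (conj p)) i^sigma3, gives again a solution of
   the model problem: as tau is purely imaginary and D is real, the lines and the poles are
   symmetric under conjugation, conjugation exchanges the two sides of each line, and the signs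
   of the off-diagonal entries turn the jump J into J again. So the identity follows from
   uniqueness, which is proved row by row for the difference (h1, h2) of two solutions.

   The jump (h1, h2)_+ = (-h2, h1)_- means that F = h1 + i h2 and G = h1 - i h2 jump by the
   factors i and -i across every line; multiplied by (-i)^k and i^k on the k-th strip they become
   holomorphic off the poles. Then F^2 - G^2 = +-4i h1 h2 is bounded near the poles (the simple
   pole of h1 at D meets the zero of h2), 1-periodic and tau-antiperiodic, hence zero by Liouville.
   So F = G or F = -G on the connected complement of the poles, which is incompatible with
   F (p + tau) = -i F p and G (p + tau) = i G p unless F = G = 0. *)

section \<open>Conjugation, translation and isolated singularities\<close>

lemma image_cnj_eq_vimage: "cnj ` A = cnj -` A"
  by (auto simp: image_iff) (metis complex_cnj_cnj)

lemma filtermap_cnj_at_within: "filtermap cnj (at a within S) = at (cnj a) within cnj ` S"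
proof (rule filtermap_linear_at_within)
  show "bij cnj"
    by (rule o_bij[of cnj]) (simp_all add: fun_eq_iff)
  show "isCont cnj a"
    by (intro continuous_intros)
  show "open (cnj ` T)" if "open T" for T
    using that by (simp add: image_cnj_eq_vimage open_vimage continuous_on_cnj continuous_on_id)
qed

lemma eventually_at_cnj:
  assumes "eventually P (at (cnj a))"
  shows "eventually (\<lambda>x. P (cnj x)) (at a)"
proof -
  have "filtermap cnj (at a) = at (cnj a)"
    using filtermap_cnj_at_within[of a UNIV] by (simp add: image_cnj_eq_vimage)
  thus ?thesis
    using assms by (metis eventually_filtermap)
qed

lemma filtermap_diff_at_within:
  fixes c :: "'a::real_normed_vector"
  shows "filtermap (\<lambda>x. x - c) (at a within S) = at (a - c) within (\<lambda>x. x - c) ` S"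
proof (rule filtermap_linear_at_within)
  show "bij (\<lambda>x::'a. x - c)"
    by (rule bij_diff_right)
  show "isCont (\<lambda>x. x - c) a"
    by (intro continuous_intros)
  show "open ((\<lambda>x. x - c) ` T)" if "open T" for T
    using open_translation[OF that, of "- c"] by simp
qed

lemma cnj_image_Im_gt: "cnj ` {q. Im q > Im p} = {q. Im q < Im (cnj p)}"
  by (auto simp: image_cnj_eq_vimage)

lemma cnj_image_Im_lt: "cnj ` {q. Im q < Im p} = {q. Im q > Im (cnj p)}"
  by (auto simp: image_cnj_eq_vimage)

lemma at_within_Im_gt_nontrivial: "at p within {q. Im q > Im p} \<noteq> bot"
proof -
  have "p islimpt {q. Im q > Im p}"
    unfolding islimpt_approachable
    by (intro allI impI bexI[of _ "p + \<i> * of_real (e / 2)" for e]) (auto simp: dist_norm norm_mult)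
  thus ?thesis
    by (simp add: trivial_limit_within)
qed

lemma at_within_Im_lt_nontrivial: "at p within {q. Im q < Im p} \<noteq> bot"
proof -
  have "p islimpt {q. Im q < Im p}"
    unfolding islimpt_approachable
    by (intro allI impI bexI[of _ "p - \<i> * of_real (e / 2)" for e]) (auto simp: dist_norm norm_mult)
  thus ?thesis
    by (simp add: trivial_limit_within)
qed

lemma norm_add_int_multiple:
  fixes f :: "complex \<Rightarrow> complex"
  assumes S: "\<And>p. p + a \<in> S \<longleftrightarrow> p \<in> S"
    and f: "\<And>p. p \<in> S \<Longrightarrow> norm (f (p + a)) = norm (f p)"
    and "p \<in> S"
  shows "p + of_int k * a \<in> S \<and> norm (f (p + of_int k * a)) = norm (f p)"
proof (induction k rule: int_induct[where k = 0])
  case (step1 i)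
  then show ?case
    using S[of "p + of_int i * a"] f[of "p + of_int i * a"] by (simp add: algebra_simps)
next
  case (step2 i)
  then show ?case
    using S[of "p + of_int (i - 1) * a"] f[of "p + of_int (i - 1) * a"] by (simp add: algebra_simps)
qed (simp add: \<open>p \<in> S\<close>)

lemma entire_periodic_antiperiodic_eq_0:
  fixes f :: "complex \<Rightarrow> complex"
  assumes "Im tau > 0" and hol: "f holomorphic_on UNIV"
    and periodic: "\<And>p. f (p + 1) = f p" and antiperiodic: "\<And>p. f (p + tau) = - f p"
  shows "f p = 0"
proof -
  define R where "R = 1 + norm tau"
  obtain B where B: "\<And>z. z \<in> cball 0 R \<Longrightarrow> norm (f z) \<le> B"
    using compact_imp_bounded[OF compact_continuous_image[OF _ compact_cball]] hol
    by (metis bounded_iff holomorphic_on_imp_continuous_on holomorphic_on_subset imageI subset_UNIV)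
  have "norm (f z) \<le> B" for z
  proof -
    define k where "k = \<lfloor>Im z / Im tau\<rfloor>"
    define m where "m = \<lfloor>Re (z - of_int k * tau)\<rfloor>"
    define z' where "z' = z + of_int (- m) * 1 + of_int (- k) * tau"
    have "norm (f z') = norm (f z)"
      using norm_add_int_multiple[of 1 UNIV f z "- m"] norm_add_int_multiple[of tau UNIV f _ "- k"]
      by (simp add: periodic antiperiodic z'_def)
    moreover have "z' \<in> cball 0 R"
    proof -
      have "of_int k \<le> Im z / Im tau" "Im z / Im tau < of_int k + 1"
        unfolding k_def by linarith+
      hence "0 \<le> Im z'" "Im z' < Im tau"
        using assms(1) by (simp_all add: z'_def field_simps)
      moreover have "0 \<le> Re z'" "Re z' < 1"
        unfolding z'_def m_def by (simp_all add: algebra_simps) linarith+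
      ultimately have "norm z' \<le> 1 + Im tau"
        using cmod_le[of z'] by linarith
      also have "Im tau \<le> norm tau"
        using abs_Im_le_cmod[of tau] by simp
      finally show ?thesis
        by (simp add: R_def)
    qed
    ultimately show ?thesis
      using B by metis
  qed
  then obtain c where "\<And>z. f z = c"
    using Liouville_theorem[OF hol] unfolding bounded_iff constant_on_def by blast
  moreover have "c = - c"
    using antiperiodic[of p] \<open>\<And>z. f z = c\<close> by simp
  ultimately show ?thesis
    by simp
qed

lemma holomorphic_on_ball_remove_isolated:
  fixes f :: "complex \<Rightarrow> complex"
  assumes hol: "f holomorphic_on - E" and "r > 0"
    and isolated: "\<And>y. y \<in> E \<Longrightarrow> y \<noteq> z \<Longrightarrow> r \<le> dist y z"
    and bounded: "z \<in> E \<Longrightarrow> \<exists>B. eventually (\<lambda>w. norm (f w) \<le> B) (at z)"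
    and g: "\<And>w. g w = (if w \<in> E then Lim (at w) f else f w)"
  shows "g holomorphic_on ball z r"
proof -
  have off: "y \<notin> E" if "y \<in> ball z r - {z}" for y
    using that isolated by (force simp: dist_commute)
  hence hol_punctured: "f holomorphic_on ball z r - {z}"
    by (intro holomorphic_on_subset[OF hol]) auto
  show ?thesis
  proof (cases "z \<in> E")
    case False
    hence "ball z r \<inter> E = {}"
      using off by blast
    hence "\<forall>y\<in>ball z r. f y = g y"
      by (auto simp: g)
    moreover have "f holomorphic_on ball z r"
      using \<open>ball z r \<inter> E = {}\<close> by (intro holomorphic_on_subset[OF hol]) auto
    ultimately show ?thesis
      using holomorphic_transform by blast
  next
    case True
    obtain h where h: "h holomorphic_on ball z r" "\<And>y. y \<in> ball z r - {z} \<Longrightarrow> h y = f y"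
      using holomorphic_on_extend_bounded[OF hol_punctured] bounded[OF True] \<open>r > 0\<close> by auto
    have "isCont h z"
      using h(1) \<open>r > 0\<close>
      by (meson centre_in_ball continuous_on_eq_continuous_at holomorphic_on_imp_continuous_on open_ball)
    hence "(h \<longlongrightarrow> h z) (at z)"
      by (simp add: isCont_def)
    moreover have "eventually (\<lambda>y. h y = f y) (at z)"
      unfolding eventually_at using h(2) \<open>r > 0\<close> by (intro exI[of _ r]) (auto simp: dist_commute)
    ultimately have "Lim (at z) f = h z"
      by (simp add: tendsto_cong tendsto_Lim)
    hence "\<forall>y\<in>ball z r. h y = g y"
      using h(2) off True by (metis DiffI g singletonD)
    thus ?thesis
      using h(1) holomorphic_transform by blast
  qed
qed

lemma holomorphic_extend_discrete:
  fixes f :: "complex \<Rightarrow> complex"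
  assumes hol: "f holomorphic_on - E" and discrete: "\<And>x. \<not> x islimpt E"
    and bounded: "\<And>e. e \<in> E \<Longrightarrow> \<exists>B. eventually (\<lambda>z. norm (f z) \<le> B) (at e)"
  obtains g where "g holomorphic_on UNIV" "\<And>z. z \<notin> E \<Longrightarrow> g z = f z"
proof -
  define g where "g w = (if w \<in> E then Lim (at w) f else f w)" for w
  have "\<exists>r>0. g holomorphic_on ball z r" for z
  proof -
    obtain r where "r > 0" "\<And>y. y \<in> E \<Longrightarrow> y \<noteq> z \<Longrightarrow> r \<le> dist y z"
      using discrete[of z] unfolding islimpt_approachable by (meson not_le)
    thus ?thesis
      using holomorphic_on_ball_remove_isolated[OF hol _ _ bounded g_def] by blast
  qed
  hence "g analytic_on UNIV"
    unfolding analytic_on_def by blast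
  hence "g holomorphic_on UNIV"
    by (rule analytic_imp_holomorphic)
  thus ?thesis
    using that[of g] by (simp add: g_def)
qed

lemma holomorphic_mult_eq_0_cases:
  fixes f g :: "complex \<Rightarrow> complex"
  assumes "f holomorphic_on A" "g holomorphic_on A" "open A" "connected A"
    and "\<And>z. z \<in> A \<Longrightarrow> f z * g z = 0"
  shows "(\<forall>z\<in>A. f z = 0) \<or> (\<forall>z\<in>A. g z = 0)"
proof (rule disjCI)
  assume "\<not> (\<forall>z\<in>A. g z = 0)"
  then obtain w where w: "w \<in> A" "g w \<noteq> 0"
    by blast
  have "isCont g w"
    using assms(2,3) w(1) by (meson continuous_on_eq_continuous_at holomorphic_on_imp_continuous_on)
  then obtain e where e: "e > 0" "\<And>y. dist w y < e \<Longrightarrow> g y \<noteq> 0"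
    using continuous_at_avoid[of w g 0] w(2) by auto
  obtain r where r: "r > 0" "ball w r \<subseteq> A"
    using assms(3) w(1) open_contains_ball by blast
  have zero: "f z = 0" if "z \<in> ball w (min e r)" for z
    using that e(2)[of z] r(2) assms(5)[of z] by auto
  have "ball w (min e r) \<subseteq> A"
    using r by auto
  show "\<forall>z\<in>A. f z = 0"
  proof
    fix z assume "z \<in> A"
    show "f z = 0"
      by (rule analytic_continuation_open[of "ball w (min e r)" A f "\<lambda>_. 0"])
         (use \<open>z \<in> A\<close> zero \<open>ball w (min e r) \<subseteq> A\<close> r e assms in auto)
  qed
qed

section \<open>Strips, cut lines and poles\<close>

(* Strip k is (k - 1/2) Im tau < Im p < (k + 1/2) Im tau; a point on the line between the strips
   k and k + 1 gets the index k + 1. *)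
definition strip_index :: "complex \<Rightarrow> complex \<Rightarrow> int" where
  "strip_index tau p = \<lfloor>Im p / Im tau + 1/2\<rfloor>"

definition regular_points :: "complex \<Rightarrow> real \<Rightarrow> complex set" where
  "regular_points tau D = mp_domain tau - pole_set tau D"

lemma mem_cut_lines_iff: "p \<in> cut_lines tau \<longleftrightarrow> (\<exists>k::int. Im p = (of_int k + 1/2) * Im tau)"
  by (simp add: cut_lines_def)

lemma mem_regular_points_iff:
  "p \<in> regular_points tau D \<longleftrightarrow> p \<notin> cut_lines tau \<and> p \<notin> pole_set tau D"
  by (simp add: regular_points_def mp_domain_def)

lemma strip_index_eqI:
  assumes "Im tau > 0" "(of_int k - 1/2) * Im tau \<le> Im p" "Im p < (of_int k + 1/2) * Im tau"
  shows "strip_index tau p = k"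
proof -
  have "of_int k \<le> Im p / Im tau + 1/2" "Im p / Im tau + 1/2 < of_int k + 1"
    using assms by (simp_all add: field_simps)
  thus ?thesis unfolding strip_index_def by linarith
qed

lemma strip_index_bounds:
  assumes "Im tau > 0" "p \<notin> cut_lines tau"
  shows "(of_int (strip_index tau p) - 1/2) * Im tau < Im p"
    and "Im p < (of_int (strip_index tau p) + 1/2) * Im tau"
proof -
  let ?k = "strip_index tau p"
  have floor: "of_int ?k \<le> Im p / Im tau + 1/2" "Im p / Im tau + 1/2 < of_int ?k + 1"
    unfolding strip_index_def by linarith+
  have "Im p \<noteq> (of_int (?k - 1) + 1/2) * Im tau"
    using assms(2) unfolding mem_cut_lines_iff by blast
  moreover have "(of_int ?k - 1/2) * Im tau \<le> Im p"
    using floor(1) assms(1) by (simp add: field_simps)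
  ultimately show "(of_int ?k - 1/2) * Im tau < Im p"
    by (simp add: algebra_simps)
  show "Im p < (of_int ?k + 1/2) * Im tau"
    using floor(2) assms(1) by (simp add: field_simps)
qed

lemma not_mem_cut_linesI:
  assumes "Im tau > 0" "(of_int k - 1/2) * Im tau < Im p" "Im p < (of_int k + 1/2) * Im tau"
  shows "p \<notin> cut_lines tau"
proof
  assume "p \<in> cut_lines tau"
  then obtain j :: int where "Im p = (of_int j + 1/2) * Im tau"
    by (auto simp: mem_cut_lines_iff)
  with assms have "of_int k - 1/2 < (of_int j + 1/2 :: real)" "of_int j + 1/2 < (of_int k + 1/2 :: real)"
    by (simp_all add: mult_less_cancel_right)
  hence "k - 1 < j" "j < k" by linarith+
  thus False by linarith
qed

lemma strip_index_cut_line: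
  assumes "Im tau > 0" "Im p = (of_int k + 1/2) * Im tau"
  shows "strip_index tau p = k + 1"
  using assms by (intro strip_index_eqI) (auto simp: algebra_simps)

lemma strip_index_add_1 [simp]: "strip_index tau (p + 1) = strip_index tau p"
  by (simp add: strip_index_def)

lemma strip_index_add_tau:
  assumes "Im tau > 0"
  shows "strip_index tau (p + tau) = strip_index tau p + 1"
proof -
  have "Im (p + tau) / Im tau + 1/2 = (Im p / Im tau + 1/2) + 1"
    using assms by (simp add: field_simps)
  thus ?thesis unfolding strip_index_def by linarith
qed

lemma strip_index_of_real: "Im tau > 0 \<Longrightarrow> strip_index tau (of_real x) = 0"
  by (simp add: strip_index_def)

lemma cut_lines_add_1_iff [simp]: "p + 1 \<in> cut_lines tau \<longleftrightarrow> p \<in> cut_lines tau"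
  by (simp add: mem_cut_lines_iff)

lemma cut_lines_add_tau_iff [simp]: "p + tau \<in> cut_lines tau \<longleftrightarrow> p \<in> cut_lines tau"
proof
  assume "p + tau \<in> cut_lines tau"
  then obtain k :: int where "Im p + Im tau = (of_int k + 1/2) * Im tau"
    by (auto simp: mem_cut_lines_iff)
  hence "Im p = (of_int (k - 1) + 1/2) * Im tau"
    by (simp add: algebra_simps)
  thus "p \<in> cut_lines tau"
    unfolding mem_cut_lines_iff by blast
next
  assume "p \<in> cut_lines tau"
  then obtain k :: int where "Im p = (of_int k + 1/2) * Im tau"
    by (auto simp: mem_cut_lines_iff)
  hence "Im (p + tau) = (of_int (k + 1) + 1/2) * Im tau"
    by (simp add: algebra_simps)
  thus "p + tau \<in> cut_lines tau"
    unfolding mem_cut_lines_iff by blast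
qed

lemma cut_lines_cnj_iff [simp]: "cnj p \<in> cut_lines tau \<longleftrightarrow> p \<in> cut_lines tau"
proof -
  have "q \<in> cut_lines tau" if q: "cnj q \<in> cut_lines tau" for q
  proof -
    obtain k :: int where "- Im q = (of_int k + 1/2) * Im tau"
      using q by (auto simp: mem_cut_lines_iff)
    hence "Im q = (of_int (- k - 1) + 1/2) * Im tau"
      by (simp add: algebra_simps)
    thus ?thesis
      unfolding mem_cut_lines_iff by blast
  qed
  from this[of p] this[of "cnj p"] show ?thesis
    by (metis complex_cnj_cnj)
qed

lemma mem_lattice_iff: "z \<in> lattice tau \<longleftrightarrow> (\<exists>m k::int. z = of_int m + of_int k * tau)"
  by (simp add: lattice_def)

lemma mem_pole_set_iff:
  "e \<in> pole_set tau D \<longleftrightarrow>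
   (\<exists>m k::int. \<exists>a. (a = 0 \<or> a = D) \<and> e = of_int m + of_int k * tau + of_real a)"
proof -
  have "e \<in> (+) (of_real D) ` lattice tau \<longleftrightarrow> (\<exists>m k::int. e = of_int m + of_int k * tau + of_real D)"
    unfolding image_iff Bex_def mem_lattice_iff by (metis add.commute)
  moreover have "(\<exists>a. (a = 0 \<or> a = D) \<and> e = z + of_real a) \<longleftrightarrow> e = z \<or> e = z + of_real D" for z
    by (simp add: conj_disj_distribR ex_disj_distrib)
  ultimately show ?thesis
    unfolding pole_set_def mem_lattice_iff Un_iff by (simp only: ex_disj_distrib)
qed

lemma cnj_tau: "Re tau = 0 \<Longrightarrow> cnj tau = - tau"
  by (simp add: complex_eq_iff)

lemma pole_setE:
  assumes "Re tau = 0" "e \<in> pole_set tau D"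
  obtains m k :: int and a where "a = 0 \<or> a = D" "Re e = of_int m + a" "Im e = of_int k * Im tau"
proof -
  obtain m k :: int and a where "a = 0 \<or> a = D" "e = of_int m + of_int k * tau + of_real a"
    using assms(2) unfolding mem_pole_set_iff by blast
  with assms(1) show ?thesis
    using that[of a m k] by simp
qed

lemma zero_mem_pole_set: "0 \<in> pole_set tau D"
  unfolding mem_pole_set_iff by (intro exI[of _ 0]) simp

lemma of_real_mem_pole_set: "of_real D \<in> pole_set tau D"
  unfolding mem_pole_set_iff by (intro exI[of _ 0] exI[of _ D]) simp

lemma pole_set_add_lattice:
  assumes "e \<in> pole_set tau D"
  shows "e + of_int j + of_int i * tau \<in> pole_set tau D"
proof -
  obtain m k :: int and a where a: "a = 0 \<or> a = D" and e: "e = of_int m + of_int k * tau + of_real a"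
    using assms unfolding mem_pole_set_iff by blast
  have "e + of_int j + of_int i * tau = of_int (m + j) + of_int (k + i) * tau + of_real a"
    unfolding e by (simp add: algebra_simps)
  with a show ?thesis
    unfolding mem_pole_set_iff by blast
qed

lemma pole_set_add_1_iff [simp]: "p + 1 \<in> pole_set tau D \<longleftrightarrow> p \<in> pole_set tau D"
proof
  show "p \<in> pole_set tau D" if "p + 1 \<in> pole_set tau D"
    using pole_set_add_lattice[OF that, of "-1" 0] by simp
  show "p + 1 \<in> pole_set tau D" if "p \<in> pole_set tau D"
    using pole_set_add_lattice[OF that, of 1 0] by simp
qed

lemma pole_set_add_tau_iff [simp]: "p + tau \<in> pole_set tau D \<longleftrightarrow> p \<in> pole_set tau D"
proof
  show "p \<in> pole_set tau D" if "p + tau \<in> pole_set tau D"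
    using pole_set_add_lattice[OF that, of 0 "-1"] by simp
  show "p + tau \<in> pole_set tau D" if "p \<in> pole_set tau D"
    using pole_set_add_lattice[OF that, of 0 1] by simp
qed

lemma pole_set_cnj_iff:
  assumes "Re tau = 0"
  shows "cnj p \<in> pole_set tau D \<longleftrightarrow> p \<in> pole_set tau D"
proof -
  have "cnj e \<in> pole_set tau D" if pole: "e \<in> pole_set tau D" for e
  proof -
    obtain m k :: int and a where a: "a = 0 \<or> a = D" and e: "e = of_int m + of_int k * tau + of_real a"
      using pole unfolding mem_pole_set_iff by blast
    have "cnj e = of_int m + of_int (- k) * tau + of_real a"
      using cnj_tau[OF assms] unfolding e by simp
    with a show ?thesis
      unfolding mem_pole_set_iff by blast
  qed
  from this[of p] this[of "cnj p"] show ?thesis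
    by (metis complex_cnj_cnj)
qed

lemma pole_set_separated:
  assumes "Re tau = 0" "Im tau > 0" "0 < D" "D < 1"
    and "e1 \<in> pole_set tau D" "e2 \<in> pole_set tau D" "e1 \<noteq> e2"
  shows "min (Im tau) (min D (1 - D)) \<le> dist e1 e2"
proof -
  obtain m1 k1 a1 where e1: "a1 = 0 \<or> a1 = D" "Re e1 = of_int m1 + a1" "Im e1 = of_int k1 * Im tau"
    using pole_setE assms by metis
  obtain m2 k2 a2 where e2: "a2 = 0 \<or> a2 = D" "Re e2 = of_int m2 + a2" "Im e2 = of_int k2 * Im tau"
    using pole_setE assms by metis
  have dist_Im: "\<bar>Im e1 - Im e2\<bar> \<le> dist e1 e2" and dist_Re: "\<bar>Re e1 - Re e2\<bar> \<le> dist e1 e2"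
    using abs_Im_le_cmod[of "e1 - e2"] abs_Re_le_cmod[of "e1 - e2"] by (simp_all add: dist_norm)
  have a12: "\<bar>a1 - a2\<bar> \<le> D"
    using e1(1) e2(1) assms(3) by auto
  consider "k1 \<noteq> k2" | "k1 = k2" "m1 \<noteq> m2" | "k1 = k2" "m1 = m2"
    by blast
  then show ?thesis
  proof cases
    case 1
    hence "1 \<le> \<bar>of_int k1 - of_int k2 :: real\<bar>" by linarith
    hence "Im tau \<le> \<bar>(of_int k1 - of_int k2) * Im tau\<bar>"
      using assms(2) by (simp add: abs_mult)
    thus ?thesis
      using dist_Im e1(3) e2(3) by (simp add: left_diff_distrib)
  next
    case 2
    hence "1 \<le> \<bar>of_int m1 - of_int m2 :: real\<bar>" by linarith
    moreover have "Re e1 - Re e2 = (of_int m1 - of_int m2) + (a1 - a2)"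
      using e1 e2 by simp
    ultimately show ?thesis
      using dist_Re a12 by linarith
  next
    case 3
    hence "a1 \<noteq> a2"
      using e1 e2 assms(7) complex_eqI by metis
    hence "Re e1 - Re e2 = D \<or> Re e1 - Re e2 = - D"
      using e1 e2 3 by auto
    thus ?thesis
      using dist_Re by auto
  qed
qed

lemma dist_cut_lines_pole_set:
  assumes "Re tau = 0" "Im tau > 0" "p \<in> cut_lines tau" "e \<in> pole_set tau D"
  shows "Im tau / 2 \<le> dist p e"
proof -
  obtain k :: int where k: "Im e = of_int k * Im tau"
    using pole_setE[OF assms(1,4)] by metis
  obtain j :: int where j: "Im p = (of_int j + 1/2) * Im tau"
    using assms(3) by (auto simp: mem_cut_lines_iff)
  have "1/2 \<le> \<bar>of_int (j - k) + 1/2 :: real\<bar>"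
    by (cases "j - k \<ge> 0") auto
  hence "Im tau / 2 \<le> \<bar>(of_int (j - k) + 1/2) * Im tau\<bar>"
    using assms(2) by (simp add: abs_mult)
  also have "\<dots> = \<bar>Im (p - e)\<bar>"
    using j k by (simp add: algebra_simps)
  also have "\<dots> \<le> dist p e"
    unfolding dist_norm by (rule abs_Im_le_cmod)
  finally show ?thesis .
qed

lemma not_islimpt_pole_set:
  assumes "Re tau = 0" "Im tau > 0" "0 < D" "D < 1"
  shows "\<not> x islimpt pole_set tau D"
proof
  assume x: "x islimpt pole_set tau D"
  define \<delta> where "\<delta> = min (Im tau) (min D (1 - D))"
  have "\<delta> > 0"
    using assms by (simp add: \<delta>_def)
  then obtain y1 where y1: "y1 \<in> pole_set tau D" "y1 \<noteq> x" "dist y1 x < \<delta>/2"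
    using x unfolding islimpt_approachable by (metis half_gt_zero)
  then obtain y2 where y2: "y2 \<in> pole_set tau D" "y2 \<noteq> x" "dist y2 x < min (\<delta>/2) (dist y1 x)"
    using x \<open>\<delta> > 0\<close> unfolding islimpt_approachable by (metis half_gt_zero min_less_iff_conj zero_less_dist_iff)
  have "y1 \<noteq> y2"
    using y2(3) by auto
  hence "\<delta> \<le> dist y1 y2"
    using pole_set_separated[OF assms y1(1) y2(1)] unfolding \<delta>_def by simp
  moreover have "dist y1 y2 \<le> dist y1 x + dist y2 x"
    using dist_triangle[of y1 y2 x] by (simp add: dist_commute)
  ultimately show False
    using y1 y2 by linarith
qed

lemma closed_pole_set:
  assumes "Re tau = 0" "Im tau > 0" "0 < D" "D < 1"
  shows "closed (pole_set tau D)"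
  using not_islimpt_pole_set[OF assms] by (simp add: closed_limpt)

lemma countable_pole_set: "countable (pole_set tau D)"
proof -
  have "lattice tau = (\<lambda>(m::int, k::int). of_int m + of_int k * tau) ` UNIV"
    by (auto simp: lattice_def)
  hence "countable (lattice tau)"
    by simp
  thus ?thesis
    unfolding pole_set_def by simp
qed

lemma regular_points_add_1_iff [simp]: "p + 1 \<in> regular_points tau D \<longleftrightarrow> p \<in> regular_points tau D"
  by (simp add: mem_regular_points_iff)

lemma regular_points_add_tau_iff [simp]: "p + tau \<in> regular_points tau D \<longleftrightarrow> p \<in> regular_points tau D"
  by (simp add: mem_regular_points_iff)

lemma regular_points_cnj_iff:
  "Re tau = 0 \<Longrightarrow> cnj p \<in> regular_points tau D \<longleftrightarrow> p \<in> regular_points tau D"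
  by (simp add: mem_regular_points_iff pole_set_cnj_iff)

lemma strip_index_locally_constant:
  assumes "Im tau > 0" "z \<notin> cut_lines tau"
  obtains r where "r > 0" "\<And>q. q \<in> ball z r \<Longrightarrow> q \<notin> cut_lines tau \<and> strip_index tau q = strip_index tau z"
proof -
  define k where "k = strip_index tau z"
  define r where "r = min (Im z - (of_int k - 1/2) * Im tau) ((of_int k + 1/2) * Im tau - Im z)"
  have "r > 0"
    using strip_index_bounds[OF assms] by (simp add: r_def k_def)
  moreover have "q \<notin> cut_lines tau \<and> strip_index tau q = k" if "q \<in> ball z r" for q
  proof -
    have "\<bar>Im z - Im q\<bar> < r"
      using that abs_Im_le_cmod[of "z - q"] by (simp add: dist_norm)
    moreover have "r \<le> Im z - (of_int k - 1/2) * Im tau" "r \<le> (of_int k + 1/2) * Im tau - Im z"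
      unfolding r_def by simp_all
    ultimately have "(of_int k - 1/2) * Im tau < Im q" "Im q < (of_int k + 1/2) * Im tau"
      by linarith+
    thus ?thesis
      using not_mem_cut_linesI[OF assms(1)] strip_index_eqI[OF assms(1)] by (meson less_imp_le)
  qed
  ultimately show ?thesis
    using that k_def by blast
qed

lemma open_mp_domain:
  assumes "Im tau > 0"
  shows "open (mp_domain tau)"
proof -
  have "\<exists>r>0. ball z r \<subseteq> - cut_lines tau" if z: "z \<notin> cut_lines tau" for z
  proof -
    obtain r where "r > 0" "\<And>q. q \<in> ball z r \<Longrightarrow> q \<notin> cut_lines tau \<and> strip_index tau q = strip_index tau z"
      using strip_index_locally_constant[OF assms z] by blast
    thus ?thesis
      by blast
  qed
  thus ?thesis
    unfolding open_contains_ball mp_domain_def by blast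
qed

lemma open_regular_points:
  assumes "Re tau = 0" "Im tau > 0" "0 < D" "D < 1"
  shows "open (regular_points tau D)"
  unfolding regular_points_def using open_mp_domain[OF assms(2)] closed_pole_set[OF assms]
  by (intro open_Diff)

lemma regular_points_nonempty:
  assumes "Re tau = 0" "Im tau > 0"
  shows "regular_points tau D \<noteq> {}"
proof -
  let ?z = "\<i> * of_real (Im tau / 4)"
  have "?z \<notin> cut_lines tau"
    by (rule not_mem_cut_linesI[OF assms(2), of 0]) (use assms(2) in simp_all)
  moreover have "?z \<notin> pole_set tau D"
  proof
    assume "?z \<in> pole_set tau D"
    then obtain m k :: int and a where "a = 0 \<or> a = D" "Re ?z = of_int m + a" "Im ?z = of_int k * Im tau"
      by (rule pole_setE[OF assms(1)])
    hence "of_int (4 * k) = (1 :: real)"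
      using assms(2) by simp
    hence "4 * k = 1"
      by (simp only: of_int_eq_1_iff)
    thus False
      by presburger
  qed
  ultimately show ?thesis
    by (auto simp: mem_regular_points_iff)
qed

lemma eventually_regular_at_pole:
  assumes "Re tau = 0" "Im tau > 0" "0 < D" "D < 1" "e \<in> pole_set tau D"
  shows "eventually (\<lambda>q. q \<in> regular_points tau D \<and> strip_index tau q = strip_index tau e) (at e)"
proof -
  define \<delta> where "\<delta> = min (Im tau) (min D (1 - D))"
  have "e \<notin> cut_lines tau"
    using dist_cut_lines_pole_set[OF assms(1,2) _ assms(5), of e] assms(2) by auto
  then obtain r where r: "r > 0" "\<And>q. q \<in> ball e r \<Longrightarrow> q \<notin> cut_lines tau \<and> strip_index tau q = strip_index tau e"
    using strip_index_locally_constant[OF assms(2)] by blast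
  have "q \<in> regular_points tau D \<and> strip_index tau q = strip_index tau e"
    if "q \<noteq> e" "dist q e < min r \<delta>" for q
  proof -
    have "q \<notin> pole_set tau D"
    proof
      assume "q \<in> pole_set tau D"
      hence "\<delta> \<le> dist q e"
        using pole_set_separated[OF assms(1-4) _ assms(5) that(1)] unfolding \<delta>_def by blast
      thus False
        using that(2) by simp
    qed
    moreover have "q \<in> ball e r"
      using that by (simp add: dist_commute)
    ultimately show ?thesis
      using r(2) by (simp add: mem_regular_points_iff)
  qed
  moreover have "min r \<delta> > 0"
    using r assms by (simp add: \<delta>_def)
  ultimately show ?thesis
    unfolding eventually_at by blast
qed

lemma near_cut_line:
  assumes "Re tau = 0" "Im tau > 0" "Im z = (of_int k + 1/2) * Im tau" "q \<in> ball z (Im tau / 2)"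
  shows "q \<notin> pole_set tau D"
    and "Im q < Im z \<Longrightarrow> q \<in> regular_points tau D \<and> strip_index tau q = k"
    and "Im z < Im q \<Longrightarrow> q \<in> regular_points tau D \<and> strip_index tau q = k + 1"
proof -
  have "z \<in> cut_lines tau"
    using assms(3) by (auto simp: mem_cut_lines_iff)
  thus q: "q \<notin> pole_set tau D"
    using dist_cut_lines_pole_set[OF assms(1,2), of z q D] assms(4) by auto
  have "\<bar>Im z - Im q\<bar> \<le> dist z q"
    using abs_Im_le_cmod[of "z - q"] by (simp add: dist_norm)
  moreover have "dist z q < Im tau / 2"
    using assms(4) by simp
  ultimately have "Im z - Im tau / 2 < Im q" "Im q < Im z + Im tau / 2"
    by linarith+
  moreover have "(of_int k - 1/2) * Im tau < Im z - Im tau / 2"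
    "Im z + Im tau / 2 < (of_int (k + 1) + 1/2) * Im tau"
    unfolding assms(3) using assms(2) by (simp_all add: algebra_simps)
  ultimately have lower: "(of_int k - 1/2) * Im tau < Im q"
    and upper: "Im q < (of_int (k + 1) + 1/2) * Im tau"
    by linarith+
  show "q \<in> regular_points tau D \<and> strip_index tau q = k" if "Im q < Im z"
  proof -
    have "Im q < (of_int k + 1/2) * Im tau"
      using that assms(3) by simp
    thus ?thesis
      using q not_mem_cut_linesI[OF assms(2) lower] strip_index_eqI[OF assms(2) less_imp_le[OF lower]]
      by (simp add: mem_regular_points_iff)
  qed
  show "q \<in> regular_points tau D \<and> strip_index tau q = k + 1" if "Im z < Im q"
  proof -
    have above: "(of_int (k + 1) - 1/2) * Im tau < Im q"
      using that assms(3) by (simp add: algebra_simps)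
    show ?thesis
      using q not_mem_cut_linesI[OF assms(2) above upper] strip_index_eqI[OF assms(2) less_imp_le[OF above] upper]
      by (simp add: mem_regular_points_iff)
  qed
qed

section \<open>Gluing across the cut lines\<close>

(* The factor c k on the k-th strip serves to cancel scalar jumps of u across the lines; on a line
   the boundary value P from above is used. *)
definition strip_glue ::
  "complex \<Rightarrow> (int \<Rightarrow> complex) \<Rightarrow> (complex \<Rightarrow> complex) \<Rightarrow> (complex \<Rightarrow> complex) \<Rightarrow> complex \<Rightarrow> complex"
where
  "strip_glue tau c u P p = c (strip_index tau p) * (if p \<in> cut_lines tau then P p else u p)"

lemma strip_glue_regular:
  "p \<in> regular_points tau D \<Longrightarrow> strip_glue tau c u P p = c (strip_index tau p) * u p"
  by (simp add: strip_glue_def mem_regular_points_iff)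

lemma holomorphic_strip_glue_regular:
  assumes tau: "Re tau = 0" "Im tau > 0" and D: "0 < D" "D < 1"
    and hol: "u holomorphic_on regular_points tau D"
  shows "strip_glue tau c u P holomorphic_on regular_points tau D"
proof -
  have "\<exists>r>0. strip_glue tau c u P holomorphic_on ball z r" if z: "z \<in> regular_points tau D" for z
  proof -
    obtain r1 where r1: "r1 > 0" "\<And>q. q \<in> ball z r1 \<Longrightarrow> strip_index tau q = strip_index tau z"
      using strip_index_locally_constant[OF tau(2)] z by (metis mem_regular_points_iff)
    obtain r2 where r2: "r2 > 0" "ball z r2 \<subseteq> regular_points tau D"
      using open_regular_points[OF tau D] z open_contains_ball by blast
    define r where "r = min r1 r2"
    have "(\<lambda>q. c (strip_index tau z) * u q) holomorphic_on ball z r"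
      using r2(2) by (intro holomorphic_intros holomorphic_on_subset[OF hol]) (auto simp: r_def)
    moreover have "c (strip_index tau z) * u q = strip_glue tau c u P q" if "q \<in> ball z r" for q
      using that r1(2)[of q] r2(2) strip_glue_regular[of q] by (auto simp: r_def)
    ultimately have "strip_glue tau c u P holomorphic_on ball z r"
      using holomorphic_transform by blast
    thus ?thesis
      using r1 r2 by (intro exI[of _ r]) (simp add: r_def)
  qed
  hence "strip_glue tau c u P analytic_on regular_points tau D"
    unfolding analytic_on_def by blast
  thus ?thesis
    by (rule analytic_imp_holomorphic)
qed

lemma isCont_strip_glue_cut_line:
  assumes tau: "Re tau = 0" "Im tau > 0" and y: "Im y = (of_int k + 1/2) * Im tau"
    and above: "(u \<longlongrightarrow> P y) (at y within {q. Im q > Im y})"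
    and below: "(u \<longlongrightarrow> Q) (at y within {q. Im q < Im y})"
    and jump: "c (k + 1) * P y = c k * Q"
    and cont: "continuous_on {q. Im q = Im y} P"
  shows "isCont (strip_glue tau c u P) y"
proof -
  let ?g = "strip_glue tau c u P"
  have line: "?g q = c (k + 1) * P q" if "Im q = Im y" for q
    using that y strip_index_cut_line[OF tau(2), of q k] by (auto simp: strip_glue_def mem_cut_lines_iff)
  have near: "eventually (\<lambda>q. ?g q = c k * u q) (at y within {q. Im q < Im y})"
    "eventually (\<lambda>q. ?g q = c (k + 1) * u q) (at y within {q. Im q > Im y})"
    unfolding eventually_at using near_cut_line(2,3)[OF tau y] tau(2)
    by (auto intro!: exI[of _ "Im tau / 2"] simp: strip_glue_regular dist_commute)
  have on_line: "eventually (\<lambda>q. ?g q = c (k + 1) * P q) (at y within {q. Im q = Im y})"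
    unfolding eventually_at_filter by (intro always_eventually) (simp add: line)
  have "(P \<longlongrightarrow> P y) (at y within {q. Im q = Im y})"
    using cont unfolding continuous_on_def by simp
  hence "(?g \<longlongrightarrow> ?g y) (at y within {q. Im q = Im y})"
    unfolding tendsto_cong[OF on_line] line[OF refl] by (rule tendsto_mult_left)
  moreover have "(?g \<longlongrightarrow> ?g y) (at y within {q. Im q > Im y})"
    unfolding tendsto_cong[OF near(2)] line[OF refl] by (rule tendsto_mult_left[OF above])
  moreover have "(?g \<longlongrightarrow> ?g y) (at y within {q. Im q < Im y})"
    unfolding tendsto_cong[OF near(1)] line[OF refl] jump by (rule tendsto_mult_left[OF below])
  ultimately have "(?g \<longlongrightarrow> ?g y) (at y within {q. Im q > Im y} \<union> {q. Im q < Im y} \<union> {q. Im q = Im y})"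
    by (simp add: Lim_within_Un)
  moreover have "{q. Im q > Im y} \<union> {q. Im q < Im y} \<union> {q. Im q = Im y} = UNIV"
    by auto
  ultimately show ?thesis
    by (simp add: isCont_def)
qed

lemma holomorphic_strip_glue_near_cut_line:
  assumes tau: "Re tau = 0" "Im tau > 0" and D: "0 < D" "D < 1"
    and hol: "u holomorphic_on regular_points tau D"
    and above: "\<And>p. p \<in> cut_lines tau \<Longrightarrow> (u \<longlongrightarrow> P p) (at p within {q. Im q > Im p})"
    and below: "\<And>p. p \<in> cut_lines tau \<Longrightarrow> (u \<longlongrightarrow> Q p) (at p within {q. Im q < Im p})"
    and jump: "\<And>p. p \<in> cut_lines tau \<Longrightarrow> c (strip_index tau p) * P p = c (strip_index tau p - 1) * Q p"
    and cont: "\<And>k::int. continuous_on {p. Im p = (of_int k + 1/2) * Im tau} P"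
    and k: "Im z = (of_int k + 1/2) * Im tau"
  shows "strip_glue tau c u P holomorphic_on ball z (Im tau / 2)"
proof -
  let ?g = "strip_glue tau c u P" and ?S = "ball z (Im tau / 2)"
  note reg = holomorphic_strip_glue_regular[OF tau D hol]
  have off_line: "q \<in> regular_points tau D" if "q \<in> ?S" "Im q \<noteq> Im z" for q
    using near_cut_line(2,3)[OF tau k, of q D] that by (cases "Im q < Im z") auto
  have "isCont ?g y" if "y \<in> ?S" for y
  proof (cases "Im y = Im z")
    case True
    hence y: "Im y = (of_int k + 1/2) * Im tau" and y_line: "y \<in> cut_lines tau"
      using k by (auto simp: mem_cut_lines_iff)
    thus ?thesis
      using isCont_strip_glue_cut_line[where u = u and P = P, OF tau y above[OF y_line] below[OF y_line]]
        jump[OF y_line] cont[of k] strip_index_cut_line[OF tau(2) y] by simp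
  next
    case False
    have "continuous_on (regular_points tau D) ?g"
      using reg by (rule holomorphic_on_imp_continuous_on)
    thus ?thesis
      using off_line[OF that False] continuous_on_eq_continuous_at[OF open_regular_points[OF tau D]]
      by blast
  qed
  hence "continuous_on ?S ?g"
    by (simp add: continuous_at_imp_continuous_on)
  moreover have "?S \<inter> {q. \<i> \<bullet> q < Im z} \<subseteq> regular_points tau D" "?S \<inter> {q. Im z < \<i> \<bullet> q} \<subseteq> regular_points tau D"
    using off_line by (auto simp: inner_complex_def)
  ultimately show ?thesis
    by (intro holomorphic_on_paste_across_line[where d = \<i> and k = "Im z", OF _ _ holomorphic_on_subset[OF reg]
          holomorphic_on_subset[OF reg]]) auto
qed

lemma holomorphic_strip_glue:
  assumes tau: "Re tau = 0" "Im tau > 0" and D: "0 < D" "D < 1"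
    and hol: "u holomorphic_on regular_points tau D"
    and above: "\<And>p. p \<in> cut_lines tau \<Longrightarrow> (u \<longlongrightarrow> P p) (at p within {q. Im q > Im p})"
    and below: "\<And>p. p \<in> cut_lines tau \<Longrightarrow> (u \<longlongrightarrow> Q p) (at p within {q. Im q < Im p})"
    and jump: "\<And>p. p \<in> cut_lines tau \<Longrightarrow> c (strip_index tau p) * P p = c (strip_index tau p - 1) * Q p"
    and cont: "\<And>k::int. continuous_on {p. Im p = (of_int k + 1/2) * Im tau} P"
  shows "strip_glue tau c u P holomorphic_on - pole_set tau D"
proof -
  have "\<exists>r>0. strip_glue tau c u P holomorphic_on ball z r" if z: "z \<notin> pole_set tau D" for z
  proof (cases "z \<in> cut_lines tau")
    case False
    hence "z \<in> regular_points tau D"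
      using z by (simp add: mem_regular_points_iff)
    then obtain r where "r > 0" "ball z r \<subseteq> regular_points tau D"
      using open_regular_points[OF tau D] open_contains_ball by blast
    thus ?thesis
      using holomorphic_on_subset[OF holomorphic_strip_glue_regular[OF tau D hol]] by blast
  next
    case True
    then obtain k :: int where "Im z = (of_int k + 1/2) * Im tau"
      by (auto simp: mem_cut_lines_iff)
    thus ?thesis
      using holomorphic_strip_glue_near_cut_line[OF tau D hol above below jump cont] tau(2)
      by (intro exI[of _ "Im tau / 2"]) auto
  qed
  hence "strip_glue tau c u P analytic_on - pole_set tau D"
    unfolding analytic_on_def by blast
  thus ?thesis
    by (rule analytic_imp_holomorphic)
qed

section \<open>The homogeneous problem\<close>

locale homogeneous_row =
  fixes tau :: complex and D :: real and s :: complex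
    and h1 h2 P1 P2 Q1 Q2 :: "complex \<Rightarrow> complex"
  assumes tau: "Re tau = 0" "Im tau > 0"
    and D: "0 < D" "D < 1"
    and s_square: "s * s = 1"
    and holomorphic: "h1 holomorphic_on regular_points tau D" "h2 holomorphic_on regular_points tau D"
    and periodic: "\<And>p. p \<in> regular_points tau D \<Longrightarrow>
      h1 (p + 1) = s * h1 p \<and> h2 (p + 1) = s * h2 p \<and> h1 (p + tau) = h1 p \<and> h2 (p + tau) = h2 p"
    and bounded_at_0: "\<exists>B. eventually (\<lambda>q. norm (h1 q) \<le> B \<and> norm (h2 q) \<le> B) (at 0)"
    and bounded_at_D: "\<exists>C. eventually (\<lambda>q. norm ((q - of_real D) * h1 q) \<le> C \<and>
      norm (h2 q) \<le> C * norm (q - of_real D)) (at (of_real D))"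
    and limits: "\<And>p. p \<in> cut_lines tau \<Longrightarrow>
      (h1 \<longlongrightarrow> P1 p) (at p within {q. Im q > Im p}) \<and> (h2 \<longlongrightarrow> P2 p) (at p within {q. Im q > Im p}) \<and>
      (h1 \<longlongrightarrow> Q1 p) (at p within {q. Im q < Im p}) \<and> (h2 \<longlongrightarrow> Q2 p) (at p within {q. Im q < Im p})"
    and jump: "\<And>p. p \<in> cut_lines tau \<Longrightarrow> P1 p = - Q2 p \<and> P2 p = Q1 p"
    and continuous: "\<And>k::int. continuous_on {p. Im p = (of_int k + 1/2) * Im tau} P1 \<and>
      continuous_on {p. Im p = (of_int k + 1/2) * Im tau} P2"
begin

(* As (P1, P2) = (-Q2, Q1), for w^2 = -1 the function h1 + w h2 jumps by the factor w across each
   line; the weight (-w)^k on the k-th strip removes this jump. *)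
definition twisted :: "complex \<Rightarrow> complex \<Rightarrow> complex" where
  "twisted w = strip_glue tau (\<lambda>k. (- w) powi k) (\<lambda>p. h1 p + w * h2 p) (\<lambda>p. P1 p + w * P2 p)"

lemma twisted_regular:
  "p \<in> regular_points tau D \<Longrightarrow> twisted w p = (- w) powi strip_index tau p * (h1 p + w * h2 p)"
  by (simp add: twisted_def strip_glue_regular)

lemma holomorphic_twisted:
  assumes w: "w * w = -1"
  shows "twisted w holomorphic_on - pole_set tau D"
  unfolding twisted_def
proof (rule holomorphic_strip_glue[OF tau D, where Q = "\<lambda>p. Q1 p + w * Q2 p"])
  show "(\<lambda>p. h1 p + w * h2 p) holomorphic_on regular_points tau D"
    using holomorphic by (intro holomorphic_intros)
  fix p assume p: "p \<in> cut_lines tau"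
  show "((\<lambda>p. h1 p + w * h2 p) \<longlongrightarrow> P1 p + w * P2 p) (at p within {q. Im q > Im p})"
    "((\<lambda>p. h1 p + w * h2 p) \<longlongrightarrow> Q1 p + w * Q2 p) (at p within {q. Im q < Im p})"
    using limits[OF p] by (auto intro!: tendsto_intros)
  have "w \<noteq> 0"
    using w by auto
  have "P1 p + w * P2 p = w * (Q1 p + w * Q2 p)"
    using jump[OF p] w by (simp add: algebra_simps flip: mult.assoc)
  moreover have "(- w) powi k * w = (- w) powi (k - 1)" for k
  proof -
    have "(- w) powi k = (- w) powi (k - 1) * (- w)"
      using power_int_minus_mult[of "- w" k] \<open>w \<noteq> 0\<close> by simp
    thus ?thesis
      using w by (simp add: mult.assoc)
  qed
  ultimately show "(- w) powi strip_index tau p * (P1 p + w * P2 p) =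
    (- w) powi (strip_index tau p - 1) * (Q1 p + w * Q2 p)"
    by (metis mult.assoc)
next
  show "continuous_on {p. Im p = (of_int k + 1/2) * Im tau} (\<lambda>p. P1 p + w * P2 p)" for k :: int
    using continuous[of k] by (intro continuous_intros) auto
qed

lemma twisted_add_1:
  assumes "p \<in> regular_points tau D"
  shows "twisted w (p + 1) = s * twisted w p"
proof -
  have "twisted w (p + 1) = (- w) powi strip_index tau p * (h1 (p + 1) + w * h2 (p + 1))"
    using twisted_regular[of "p + 1"] assms by simp
  thus ?thesis
    using periodic[OF assms] by (simp add: twisted_regular[OF assms] algebra_simps)
qed

lemma twisted_add_tau:
  assumes "w * w = -1" "p \<in> regular_points tau D"
  shows "twisted w (p + tau) = - w * twisted w p"
proof -
  have "w \<noteq> 0"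
    using assms(1) by auto
  thus ?thesis
    using periodic[OF assms(2)] assms(2)
    by (simp add: twisted_regular strip_index_add_tau[OF tau(2)] power_int_add_1')
qed

definition sq_diff :: "complex \<Rightarrow> complex" where
  "sq_diff p = twisted \<i> p ^ 2 - twisted (- \<i>) p ^ 2"

lemma sq_diff_regular:
  assumes "p \<in> regular_points tau D"
  shows "sq_diff p = (-1) powi strip_index tau p * (4 * \<i> * h1 p * h2 p)"
proof -
  have "((- \<i>) powi k) ^ 2 = (-1) powi k" "(\<i> powi k) ^ 2 = (-1) powi k" for k
    by (simp_all add: power2_eq_square power_int_mult_distrib[symmetric])
  thus ?thesis
    using assms by (simp add: sq_diff_def twisted_regular power_mult_distrib algebra_simps power2_eq_square)
qed

lemma holomorphic_sq_diff: "sq_diff holomorphic_on - pole_set tau D"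
  unfolding sq_diff_def using holomorphic_twisted[of \<i>] holomorphic_twisted[of "- \<i>"]
  by (intro holomorphic_intros) auto

lemma sq_diff_add_1: "p \<in> regular_points tau D \<Longrightarrow> sq_diff (p + 1) = sq_diff p"
  using s_square by (simp add: sq_diff_def twisted_add_1 power_mult_distrib flip: power2_eq_square)

lemma sq_diff_add_tau: "p \<in> regular_points tau D \<Longrightarrow> sq_diff (p + tau) = - sq_diff p"
  by (simp add: sq_diff_def twisted_add_tau power_mult_distrib)

lemma norm_sq_diff_add_lattice:
  assumes "q \<in> regular_points tau D"
  shows "q + of_int m * 1 + of_int k * tau \<in> regular_points tau D \<and>
    norm (sq_diff (q + of_int m * 1 + of_int k * tau)) = norm (sq_diff q)"
  using norm_add_int_multiple[of 1 "regular_points tau D" sq_diff q m]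
    norm_add_int_multiple[of tau "regular_points tau D" sq_diff "q + of_int m * 1" k]
  by (simp add: assms sq_diff_add_1 sq_diff_add_tau)

lemma sq_diff_bounded_at_0: "\<exists>B. eventually (\<lambda>q. norm (sq_diff q) \<le> B) (at 0)"
proof -
  obtain B where B: "eventually (\<lambda>q. norm (h1 q) \<le> B \<and> norm (h2 q) \<le> B) (at 0)"
    using bounded_at_0 by blast
  moreover have "eventually (\<lambda>q. q \<in> regular_points tau D \<and> strip_index tau q = 0) (at 0)"
    using eventually_regular_at_pole[OF tau D zero_mem_pole_set] strip_index_of_real[OF tau(2), of 0]
    by simp
  ultimately have "eventually (\<lambda>q. norm (sq_diff q) \<le> 4 * (B * B)) (at 0)"
  proof eventually_elim
    case (elim q)
    hence "norm (sq_diff q) = 4 * (norm (h1 q) * norm (h2 q))"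
      by (simp add: sq_diff_regular norm_mult)
    also have "\<dots> \<le> 4 * (B * B)"
      using elim by (intro mult_left_mono mult_mono) (auto intro: order_trans[OF norm_ge_zero])
    finally show ?case .
  qed
  thus ?thesis
    by blast
qed

(* The simple pole of h1 at D is compensated by the zero of h2. *)
lemma sq_diff_bounded_at_D: "\<exists>B. eventually (\<lambda>q. norm (sq_diff q) \<le> B) (at (of_real D))"
proof -
  obtain C where "eventually (\<lambda>q. norm ((q - of_real D) * h1 q) \<le> C \<and>
      norm (h2 q) \<le> C * norm (q - of_real D)) (at (of_real D))"
    using bounded_at_D by blast
  moreover have "eventually (\<lambda>q. q \<in> regular_points tau D \<and> strip_index tau q = 0) (at (of_real D))"
    using eventually_regular_at_pole[OF tau D of_real_mem_pole_set] strip_index_of_real[OF tau(2)]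
    by simp
  moreover have "eventually (\<lambda>q. q \<noteq> of_real D) (at (of_real D))"
    by (simp add: eventually_at_filter)
  ultimately have "eventually (\<lambda>q. norm (sq_diff q) \<le> 4 * (C * C)) (at (of_real D))"
  proof eventually_elim
    case (elim q)
    have "C \<ge> 0"
      using elim(1) norm_ge_zero[of "(q - of_real D) * h1 q"] by linarith
    have "norm (sq_diff q) * norm (q - of_real D) = 4 * (norm ((q - of_real D) * h1 q) * norm (h2 q))"
      using elim by (simp add: sq_diff_regular norm_mult)
    also have "\<dots> \<le> 4 * (C * (C * norm (q - of_real D)))"
      using elim \<open>C \<ge> 0\<close> by (intro mult_left_mono mult_mono) auto
    finally show ?case
      using elim(3) by (simp add: mult.assoc)
  qed
  thus ?thesis
    by blast
qed

lemma sq_diff_bounded_at_pole: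
  assumes "e \<in> pole_set tau D"
  shows "\<exists>B. eventually (\<lambda>q. norm (sq_diff q) \<le> B) (at e)"
proof -
  obtain m k :: int and a where a: "a = 0 \<or> a = D" and e: "e = of_int m + of_int k * tau + of_real a"
    using assms unfolding mem_pole_set_iff by blast
  define d where "d = of_int m + of_int k * tau"
  obtain B where "eventually (\<lambda>q. norm (sq_diff q) \<le> B) (at (of_real a))"
    using a sq_diff_bounded_at_0 sq_diff_bounded_at_D by auto
  moreover have "at (of_real a) = filtermap (\<lambda>x. x - d) (at e)"
    using filtermap_at_shift[of d e] by (simp add: e d_def)
  ultimately have "eventually (\<lambda>x. norm (sq_diff (x - d)) \<le> B) (at e)"
    by (simp add: eventually_filtermap)
  moreover have "eventually (\<lambda>x. x \<in> regular_points tau D) (at e)"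
    using eventually_regular_at_pole[OF tau D assms] by (rule eventually_mono) simp
  ultimately have "eventually (\<lambda>x. norm (sq_diff x) \<le> B) (at e)"
  proof eventually_elim
    case (elim x)
    have "x - d \<in> regular_points tau D"
      using norm_sq_diff_add_lattice[of x "- m" "- k"] elim(2) by (simp add: d_def algebra_simps)
    thus ?case
      using norm_sq_diff_add_lattice[of "x - d" m k] elim(1) by (simp add: d_def)
  qed
  thus ?thesis
    by blast
qed

lemma sq_diff_eq_0:
  assumes "p \<notin> pole_set tau D"
  shows "sq_diff p = 0"
proof -
  obtain f where f: "f holomorphic_on UNIV" "\<And>z. z \<notin> pole_set tau D \<Longrightarrow> f z = sq_diff z"
    using holomorphic_extend_discrete[OF holomorphic_sq_diff not_islimpt_pole_set[OF tau D]
        sq_diff_bounded_at_pole] by blast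
  have regular: "z \<notin> pole_set tau D" if "z \<in> regular_points tau D" for z
    using that by (simp add: mem_regular_points_iff)
  have shift: "(\<lambda>z. f (z + c)) holomorphic_on UNIV" for c
  proof -
    have "(f \<circ> (\<lambda>z. z + c)) holomorphic_on UNIV"
      by (rule holomorphic_on_compose) (auto intro: holomorphic_intros holomorphic_on_subset[OF f(1)])
    thus ?thesis
      by (simp add: o_def)
  qed
  note continuation = analytic_continuation_open[OF open_regular_points[OF tau D]
      open_UNIV regular_points_nonempty[OF tau] connected_UNIV subset_UNIV shift]
  have "f (z + 1) = f z" for z
    by (rule continuation[OF f(1)]) (simp_all add: f(2) regular sq_diff_add_1)
  moreover have "f (z + tau) = - f z" for z
    by (rule continuation[OF holomorphic_on_minus[OF f(1)]]) (simp_all add: f(2) regular sq_diff_add_tau)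
  ultimately have "f p = 0"
    using entire_periodic_antiperiodic_eq_0[OF tau(2) f(1)] by blast
  thus ?thesis
    using f(2)[OF assms] by simp
qed

theorem eq_0:
  assumes p: "p \<in> regular_points tau D"
  shows "h1 p = 0 \<and> h2 p = 0"
proof -
  let ?F = "twisted \<i>" and ?G = "twisted (- \<i>)"
  have "(\<forall>z \<in> - pole_set tau D. ?F z - ?G z = 0) \<or> (\<forall>z \<in> - pole_set tau D. ?F z + ?G z = 0)"
  proof (rule holomorphic_mult_eq_0_cases)
    show "open (- pole_set tau D)"
      using closed_pole_set[OF tau D] by auto
    show "connected (- pole_set tau D)"
      using connected_open_diff_countable[OF _ open_UNIV connected_UNIV countable_pole_set]
      by (simp add: Compl_eq_Diff_UNIV)
    show "(\<lambda>z. ?F z - ?G z) holomorphic_on - pole_set tau D" "(\<lambda>z. ?F z + ?G z) holomorphic_on - pole_set tau D"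
      using holomorphic_twisted[of \<i>] holomorphic_twisted[of "- \<i>"] by (auto intro!: holomorphic_intros)
    show "(?F z - ?G z) * (?F z + ?G z) = 0" if "z \<in> - pole_set tau D" for z
      using sq_diff_eq_0[of z] that by (simp add: sq_diff_def power2_eq_square algebra_simps)
  qed
  moreover have "p \<in> - pole_set tau D" "p + tau \<in> - pole_set tau D"
    using p by (simp_all add: mem_regular_points_iff)
  moreover have F: "?F (p + tau) = - \<i> * ?F p" and G: "?G (p + tau) = \<i> * ?G p"
    using twisted_add_tau[OF _ p] by simp_all
  ultimately have "?F p = ?G p \<and> ?F (p + tau) = ?G (p + tau) \<or> ?F p = - ?G p \<and> ?F (p + tau) = - ?G (p + tau)"
    by (metis add_eq_0_iff2 eq_iff_diff_eq_0 minus_minus)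
  hence "?F p = 0"
    using F G by (auto simp: algebra_simps)
  moreover from this have "?G p = 0"
    using \<open>?F p = ?G p \<and> _ \<or> _\<close> by auto
  ultimately have "?F p = 0" "?G p = 0" .
  hence "h1 p + \<i> * h2 p = 0" "h1 p - \<i> * h2 p = 0"
    using p by (simp_all add: twisted_regular)
  hence "h1 p = - (\<i> * h2 p)" "h1 p = \<i> * h2 p"
    by (simp_all add: eq_neg_iff_add_eq_0)
  thus ?thesis
    by simp
qed

end

section \<open>Uniqueness for the model problem\<close>

lemma model_solution_holomorphic:
  "model_solution n tau D M \<Longrightarrow> (\<lambda>p. M p $ i $ j) holomorphic_on regular_points tau D"
  unfolding model_solution_def regular_points_def by blast

lemma model_solution_periodic:
  "model_solution n tau D M \<Longrightarrow> p \<in> mp_domain tau \<Longrightarrow>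
    M (p + 1) = ((-1::real) ^ (n - 1)) *\<^sub>R M p \<and> M (p + tau) = M p"
  unfolding model_solution_def by blast

lemma model_solution_boundary:
  "model_solution n tau D M \<Longrightarrow> p \<in> cut_lines tau \<Longrightarrow>
    (M \<longlongrightarrow> bv_plus M p) (at p within {q. Im q > Im p}) \<and>
    (M \<longlongrightarrow> bv_minus M p) (at p within {q. Im q < Im p}) \<and>
    bv_plus M p = bv_minus M p ** jump_J"
  unfolding model_solution_def by blast

lemma model_solution_continuous:
  "model_solution n tau D M \<Longrightarrow>
    continuous_on {p. Im p = (of_int k + 1/2) * Im tau} (bv_plus M) \<and>
    continuous_on {p. Im p = (of_int k + 1/2) * Im tau} (bv_minus M)"
  unfolding model_solution_def by blast

lemma bv_plus_eqI: "(M \<longlongrightarrow> B) (at p within {q. Im q > Im p}) \<Longrightarrow> bv_plus M p = B"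
  unfolding bv_plus_def using at_within_Im_gt_nontrivial by (rule tendsto_Lim)

lemma bv_minus_eqI: "(M \<longlongrightarrow> B) (at p within {q. Im q < Im p}) \<Longrightarrow> bv_minus M p = B"
  unfolding bv_minus_def using at_within_Im_lt_nontrivial by (rule tendsto_Lim)

lemma norm_matrix_nth_le: "norm (X $ i $ j) \<le> norm (X :: cmat)"
  by (meson Finite_Cartesian_Product.norm_nth_le order_trans)

lemma mult_jump_J_nth [simp]:
  "(X ** jump_J) $ r $ 1 = - X $ r $ 2" "(X ** jump_J) $ r $ 2 = X $ r $ 1"
  by (simp_all add: matrix_matrix_mult_def sum_2 jump_J_def)

lemma model_solution_diff_bounded_at_0:
  fixes M1 M2 :: "complex \<Rightarrow> cmat"
  assumes M1: "model_solution n tau D M1" and M2: "model_solution n tau D M2"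
  shows "\<exists>B. \<forall>\<^sub>F q in at 0. norm (M1 q $ r $ 1 - M2 q $ r $ 1) \<le> B \<and> norm (M1 q $ r $ 2 - M2 q $ r $ 2) \<le> B"
proof -
  let ?R = "\<lambda>M q. (\<chi> i j. M q $ i $ j - (if i = j then 1 / q else 0)) :: cmat"
  obtain C1 C2 where "\<forall>\<^sub>F q in at 0. norm (?R M1 q) \<le> C1" "\<forall>\<^sub>F q in at 0. norm (?R M2 q) \<le> C2"
    using M1 M2 unfolding model_solution_def by blast
  hence "\<forall>\<^sub>F q in at 0. \<forall>j. norm (M1 q $ r $ j - M2 q $ r $ j) \<le> C1 + C2"
  proof eventually_elim
    case (elim q)
    have "norm (M1 q $ r $ j - M2 q $ r $ j) = norm (?R M1 q $ r $ j - ?R M2 q $ r $ j)" for j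
      by simp
    also have "\<dots> j \<le> C1 + C2" for j
      using norm_triangle_ineq4 norm_matrix_nth_le elim by (smt (verit))
    finally show ?case
      by blast
  qed
  thus ?thesis
    by (blast intro: eventually_mono)
qed

lemma model_solution_diff_bounded_at_D:
  fixes M1 M2 :: "complex \<Rightarrow> cmat"
  assumes M1: "model_solution n tau D M1" and M2: "model_solution n tau D M2"
  shows "\<exists>C. \<forall>\<^sub>F q in at (of_real D). norm ((q - of_real D) * (M1 q $ r $ 1 - M2 q $ r $ 1)) \<le> C \<and>
    norm (M1 q $ r $ 2 - M2 q $ r $ 2) \<le> C * norm (q - of_real D)"
proof -
  obtain C1 C2 where "\<forall>\<^sub>F q in at (of_real D). \<forall>i.
      norm ((q - of_real D) * M1 q $ i $ 1) \<le> C1 \<and> norm (M1 q $ i $ 2) \<le> C1 * norm (q - of_real D)"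
    "\<forall>\<^sub>F q in at (of_real D). \<forall>i.
      norm ((q - of_real D) * M2 q $ i $ 1) \<le> C2 \<and> norm (M2 q $ i $ 2) \<le> C2 * norm (q - of_real D)"
    using M1 M2 unfolding model_solution_def by blast
  hence "\<forall>\<^sub>F q in at (of_real D). norm ((q - of_real D) * (M1 q $ r $ 1 - M2 q $ r $ 1)) \<le> C1 + C2 \<and>
      norm (M1 q $ r $ 2 - M2 q $ r $ 2) \<le> (C1 + C2) * norm (q - of_real D)"
  proof eventually_elim
    case (elim q)
    have "norm ((q - of_real D) * (M1 q $ r $ 1 - M2 q $ r $ 1)) \<le>
        norm ((q - of_real D) * M1 q $ r $ 1) + norm ((q - of_real D) * M2 q $ r $ 1)"
      by (metis norm_triangle_ineq4 right_diff_distrib)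
    moreover have "norm (M1 q $ r $ 2 - M2 q $ r $ 2) \<le> norm (M1 q $ r $ 2) + norm (M2 q $ r $ 2)"
      by (rule norm_triangle_ineq4)
    ultimately show ?case
      using elim by (smt (verit) distrib_right)
  qed
  thus ?thesis
    by blast
qed

lemma homogeneous_row_model_solution_diff:
  assumes tau: "Re tau = 0" "Im tau > 0" and D: "0 < D" "D < 1"
    and M1: "model_solution n tau D M1" and M2: "model_solution n tau D M2"
  shows "homogeneous_row tau D (of_real ((-1) ^ (n - 1)))
    (\<lambda>q. M1 q $ r $ 1 - M2 q $ r $ 1) (\<lambda>q. M1 q $ r $ 2 - M2 q $ r $ 2)
    (\<lambda>q. bv_plus M1 q $ r $ 1 - bv_plus M2 q $ r $ 1) (\<lambda>q. bv_plus M1 q $ r $ 2 - bv_plus M2 q $ r $ 2)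
    (\<lambda>q. bv_minus M1 q $ r $ 1 - bv_minus M2 q $ r $ 1) (\<lambda>q. bv_minus M1 q $ r $ 2 - bv_minus M2 q $ r $ 2)"
proof unfold_locales
  show "of_real ((-1) ^ (n - 1)) * of_real ((-1) ^ (n - 1)) = (1::complex)"
    by (simp flip: of_real_mult power_mult_distrib)
  show "(\<lambda>q. M1 q $ r $ 1 - M2 q $ r $ 1) holomorphic_on regular_points tau D"
    "(\<lambda>q. M1 q $ r $ 2 - M2 q $ r $ 2) holomorphic_on regular_points tau D"
    using model_solution_holomorphic[OF M1] model_solution_holomorphic[OF M2] by (auto intro!: holomorphic_intros)
next
  fix p assume "p \<in> regular_points tau D"
  hence p: "p \<in> mp_domain tau"
    by (simp add: regular_points_def)
  have per: "M (p + 1) $ r $ j = of_real ((-1) ^ (n - 1)) * M p $ r $ j" "M (p + tau) = M p"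
    if "model_solution n tau D M" for M j
    using model_solution_periodic[OF that p] by (simp_all add: scaleR_conv_of_real[where 'a = complex])
  show "M1 (p + 1) $ r $ 1 - M2 (p + 1) $ r $ 1 = of_real ((-1) ^ (n - 1)) * (M1 p $ r $ 1 - M2 p $ r $ 1) \<and>
    M1 (p + 1) $ r $ 2 - M2 (p + 1) $ r $ 2 = of_real ((-1) ^ (n - 1)) * (M1 p $ r $ 2 - M2 p $ r $ 2) \<and>
    M1 (p + tau) $ r $ 1 - M2 (p + tau) $ r $ 1 = M1 p $ r $ 1 - M2 p $ r $ 1 \<and>
    M1 (p + tau) $ r $ 2 - M2 (p + tau) $ r $ 2 = M1 p $ r $ 2 - M2 p $ r $ 2"
    using per[OF M1] per[OF M2] by (simp add: algebra_simps)
next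
  fix p assume p: "p \<in> cut_lines tau"
  note B1 = model_solution_boundary[OF M1 p] and B2 = model_solution_boundary[OF M2 p]
  have "((\<lambda>q. M1 q $ r $ j - M2 q $ r $ j) \<longlongrightarrow> bv_plus M1 p $ r $ j - bv_plus M2 p $ r $ j)
      (at p within {q. Im q > Im p})"
    "((\<lambda>q. M1 q $ r $ j - M2 q $ r $ j) \<longlongrightarrow> bv_minus M1 p $ r $ j - bv_minus M2 p $ r $ j)
      (at p within {q. Im q < Im p})" for j
    using B1 B2 by (auto intro!: tendsto_diff tendsto_vec_nth)
  thus "((\<lambda>q. M1 q $ r $ 1 - M2 q $ r $ 1) \<longlongrightarrow> bv_plus M1 p $ r $ 1 - bv_plus M2 p $ r $ 1)
      (at p within {q. Im q > Im p}) \<and>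
    ((\<lambda>q. M1 q $ r $ 2 - M2 q $ r $ 2) \<longlongrightarrow> bv_plus M1 p $ r $ 2 - bv_plus M2 p $ r $ 2)
      (at p within {q. Im q > Im p}) \<and>
    ((\<lambda>q. M1 q $ r $ 1 - M2 q $ r $ 1) \<longlongrightarrow> bv_minus M1 p $ r $ 1 - bv_minus M2 p $ r $ 1)
      (at p within {q. Im q < Im p}) \<and>
    ((\<lambda>q. M1 q $ r $ 2 - M2 q $ r $ 2) \<longlongrightarrow> bv_minus M1 p $ r $ 2 - bv_minus M2 p $ r $ 2)
      (at p within {q. Im q < Im p})"
    by blast
  show "bv_plus M1 p $ r $ 1 - bv_plus M2 p $ r $ 1 = - (bv_minus M1 p $ r $ 2 - bv_minus M2 p $ r $ 2) \<and>
      bv_plus M1 p $ r $ 2 - bv_plus M2 p $ r $ 2 = bv_minus M1 p $ r $ 1 - bv_minus M2 p $ r $ 1"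
    using B1 B2 by simp
next
  fix k :: int
  have "continuous_on {p. Im p = (of_int k + 1/2) * Im tau} (\<lambda>q. bv_plus M1 q $ r $ j - bv_plus M2 q $ r $ j)"
    for j
    using model_solution_continuous[OF M1, of k] model_solution_continuous[OF M2, of k]
    by (auto intro!: continuous_intros)
  thus "continuous_on {p. Im p = (of_int k + 1/2) * Im tau} (\<lambda>q. bv_plus M1 q $ r $ 1 - bv_plus M2 q $ r $ 1) \<and>
    continuous_on {p. Im p = (of_int k + 1/2) * Im tau} (\<lambda>q. bv_plus M1 q $ r $ 2 - bv_plus M2 q $ r $ 2)"
    by blast
qed (use tau D model_solution_diff_bounded_at_0[OF M1 M2] model_solution_diff_bounded_at_D[OF M1 M2] in auto)

theorem model_solution_unique:
  assumes tau: "Re tau = 0" "Im tau > 0" and D: "0 < D" "D < 1"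
    and M1: "model_solution n tau D M1" and M2: "model_solution n tau D M2"
    and p: "p \<in> regular_points tau D"
  shows "M1 p = M2 p"
proof -
  have "M1 p $ r $ j = M2 p $ r $ j" for r j
  proof -
    interpret homogeneous_row tau D "of_real ((-1) ^ (n - 1))"
      "\<lambda>q. M1 q $ r $ 1 - M2 q $ r $ 1" "\<lambda>q. M1 q $ r $ 2 - M2 q $ r $ 2"
      "\<lambda>q. bv_plus M1 q $ r $ 1 - bv_plus M2 q $ r $ 1" "\<lambda>q. bv_plus M1 q $ r $ 2 - bv_plus M2 q $ r $ 2"
      "\<lambda>q. bv_minus M1 q $ r $ 1 - bv_minus M2 q $ r $ 1" "\<lambda>q. bv_minus M1 q $ r $ 2 - bv_minus M2 q $ r $ 2"
      by (rule homogeneous_row_model_solution_diff[OF tau D M1 M2])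
    show ?thesis
      using eq_0[OF p] exhaust_2[of j] by auto
  qed
  thus ?thesis
    by (simp add: vec_eq_iff)
qed

section \<open>The sigma3-reflection\<close>

(* X \<mapsto> i^-sigma3 conj X i^sigma3, written entrywise. *)
definition sigma3_conj :: "cmat \<Rightarrow> cmat" where
  "sigma3_conj X = (\<chi> i j. (if i = j then 1 else -1) * cnj (X $ i $ j))"

definition sigma3_reflection :: "(complex \<Rightarrow> cmat) \<Rightarrow> complex \<Rightarrow> cmat" where
  "sigma3_reflection M p = sigma3_conj (M (cnj p))"

lemma sigma3_conj_nth [simp]: "sigma3_conj X $ i $ j = (if i = j then 1 else -1) * cnj (X $ i $ j)"
  by (simp add: sigma3_conj_def)

lemma i_sigma3_mult_sigma3_conj:
  "i_sigma3 ** sigma3_conj X ** i_minus_sigma3 = (\<chi> i j. cnj (X $ i $ j))"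
  unfolding vec_eq_iff using exhaust_2
  by (auto simp: matrix_matrix_mult_def sum_2 i_sigma3_def i_minus_sigma3_def forall_2 algebra_simps)

lemma norm_sigma3_conj [simp]: "norm (sigma3_conj X) = norm X"
  unfolding norm_vec_def by (intro L2_set_cong refl) (simp add: norm_mult)

lemma sigma3_conj_diff: "sigma3_conj X - sigma3_conj Y = sigma3_conj (X - Y)"
  by (simp add: vec_eq_iff algebra_simps)

lemma sigma3_conj_scaleR: "sigma3_conj (c *\<^sub>R X) = c *\<^sub>R sigma3_conj X"
  by (simp add: vec_eq_iff complex_cnj_scaleR)

lemma sigma3_conj_mult_jump_J: "sigma3_conj (X ** jump_J) ** jump_J = sigma3_conj X"
  unfolding vec_eq_iff using exhaust_2 by (auto simp: forall_2)

lemma tendsto_sigma3_conj: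
  "(f \<longlongrightarrow> L) F \<Longrightarrow> ((\<lambda>x. sigma3_conj (f x)) \<longlongrightarrow> sigma3_conj L) F"
  unfolding tendsto_iff dist_norm by (simp add: sigma3_conj_diff)

lemma continuous_on_sigma3_conj:
  "continuous_on S f \<Longrightarrow> continuous_on S (\<lambda>x. sigma3_conj (f x))"
  unfolding continuous_on_def by (blast intro: tendsto_sigma3_conj)

lemma tendsto_sigma3_reflection:
  assumes "(M \<longlongrightarrow> B) (at (cnj p) within cnj ` S)"
  shows "(sigma3_reflection M \<longlongrightarrow> sigma3_conj B) (at p within S)"
proof -
  have "((\<lambda>q. M (cnj q)) \<longlongrightarrow> B) (at p within S)"
    using assms by (simp add: filterlim_def filtermap_filtermap[symmetric] filtermap_cnj_at_within)
  thus ?thesis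
    unfolding sigma3_reflection_def by (rule tendsto_sigma3_conj)
qed

lemma boundary_values_sigma3_reflection:
  assumes "model_solution n tau D M" "p \<in> cut_lines tau"
  shows "(sigma3_reflection M \<longlongrightarrow> sigma3_conj (bv_minus M (cnj p))) (at p within {q. Im q > Im p})"
    and "(sigma3_reflection M \<longlongrightarrow> sigma3_conj (bv_plus M (cnj p))) (at p within {q. Im q < Im p})"
  using model_solution_boundary[OF assms(1), of "cnj p"] assms(2)
  by (auto intro!: tendsto_sigma3_reflection simp: cnj_image_Im_gt cnj_image_Im_lt)

lemma bv_sigma3_reflection:
  assumes "model_solution n tau D M" "p \<in> cut_lines tau"
  shows "bv_plus (sigma3_reflection M) p = sigma3_conj (bv_minus M (cnj p))"
    and "bv_minus (sigma3_reflection M) p = sigma3_conj (bv_plus M (cnj p))"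
  using boundary_values_sigma3_reflection[OF assms] by (simp_all add: bv_plus_eqI bv_minus_eqI)

lemma holomorphic_sigma3_reflection:
  assumes tau: "Re tau = 0" "Im tau > 0" and D: "0 < D" "D < 1"
    and M: "model_solution n tau D M"
  shows "(\<lambda>p. sigma3_reflection M p $ i $ j) holomorphic_on regular_points tau D"
proof -
  have "cnj \<circ> (\<lambda>p. M p $ i $ j) \<circ> cnj holomorphic_on regular_points tau D"
    using model_solution_holomorphic[OF M] open_regular_points[OF tau D] regular_points_cnj_iff[OF tau(1)]
    by (intro holomorphic_on_compose_cnj_cnj) (simp_all add: image_cnj_eq_vimage vimage_def)
  hence "(\<lambda>p. (if i = j then 1 else -1) * cnj (M (cnj p) $ i $ j)) holomorphic_on regular_points tau D"
    by (intro holomorphic_intros) (simp add: o_def)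
  thus ?thesis
    by (simp add: sigma3_reflection_def)
qed

lemma sigma3_reflection_bounded_at_0:
  assumes "model_solution n tau D M"
  shows "\<exists>C. \<forall>\<^sub>F p in at 0.
    norm ((\<chi> i j. sigma3_reflection M p $ i $ j - (if i = j then 1 / p else 0)) :: cmat) \<le> C"
proof -
  obtain C where C: "\<forall>\<^sub>F p in at 0. norm ((\<chi> i j. M p $ i $ j - (if i = j then 1 / p else 0)) :: cmat) \<le> C"
    using assms unfolding model_solution_def by blast
  have "(\<chi> i j. sigma3_reflection M p $ i $ j - (if i = j then 1 / p else 0)) =
      sigma3_conj (\<chi> i j. M (cnj p) $ i $ j - (if i = j then 1 / cnj p else 0))" for p
    by (simp add: vec_eq_iff sigma3_reflection_def algebra_simps)
  moreover have "\<forall>\<^sub>F p in at 0. norm ((\<chi> i j. M (cnj p) $ i $ j - (if i = j then 1 / cnj p else 0)) :: cmat) \<le> C"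
    using eventually_at_cnj[of "\<lambda>p. norm ((\<chi> i j. M p $ i $ j - (if i = j then 1 / p else 0)) :: cmat) \<le> C" 0] C
    by simp
  ultimately show ?thesis
    by auto
qed

lemma sigma3_reflection_bounded_at_D:
  assumes "model_solution n tau D M"
  shows "\<exists>C. \<forall>\<^sub>F p in at (of_real D). \<forall>i.
    norm ((p - of_real D) * sigma3_reflection M p $ i $ 1) \<le> C \<and>
    norm (sigma3_reflection M p $ i $ 2) \<le> C * norm (p - of_real D)"
proof -
  obtain C where C: "\<forall>\<^sub>F p in at (of_real D). \<forall>i.
      norm ((p - of_real D) * M p $ i $ 1) \<le> C \<and> norm (M p $ i $ 2) \<le> C * norm (p - of_real D)"
    using assms unfolding model_solution_def by blast
  have norm_cnj: "norm (cnj p - of_real D) = norm (p - of_real D)" for p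
    by (metis complex_cnj_complex_of_real complex_cnj_diff complex_mod_cnj)
  have "\<forall>\<^sub>F p in at (of_real D). \<forall>i. norm ((cnj p - of_real D) * M (cnj p) $ i $ 1) \<le> C \<and>
      norm (M (cnj p) $ i $ 2) \<le> C * norm (cnj p - of_real D)"
    using eventually_at_cnj[of "\<lambda>p. \<forall>i. norm ((p - of_real D) * M p $ i $ 1) \<le> C \<and>
      norm (M p $ i $ 2) \<le> C * norm (p - of_real D)" "of_real D"] C
    by simp
  hence "\<forall>\<^sub>F p in at (of_real D). \<forall>i. norm ((p - of_real D) * sigma3_reflection M p $ i $ 1) \<le> C \<and>
      norm (sigma3_reflection M p $ i $ 2) \<le> C * norm (p - of_real D)"
    by (rule eventually_mono) (simp add: sigma3_reflection_def norm_mult norm_cnj)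
  thus ?thesis
    by blast
qed

lemma continuous_on_bv_sigma3_reflection:
  assumes M: "model_solution n tau D M"
  shows "continuous_on {p. Im p = (of_int k + 1/2) * Im tau} (bv_plus (sigma3_reflection M))"
    and "continuous_on {p. Im p = (of_int k + 1/2) * Im tau} (bv_minus (sigma3_reflection M))"
proof -
  let ?L = "\<lambda>k::int. {p. Im p = (of_int k + 1/2) * Im tau}"
  have "cnj ` ?L k \<subseteq> ?L (- k - 1)"
    by (auto simp: algebra_simps)
  hence "continuous_on (?L k) (\<lambda>p. bv_minus M (cnj p))" "continuous_on (?L k) (\<lambda>p. bv_plus M (cnj p))"
    using model_solution_continuous[OF M, of "- k - 1"]
    by (auto intro: continuous_on_compose2[OF _ continuous_on_cnj[OF continuous_on_id]])
  moreover have "p \<in> cut_lines tau" if "p \<in> ?L k" for p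
    using that by (auto simp: mem_cut_lines_iff)
  ultimately show "continuous_on (?L k) (bv_plus (sigma3_reflection M))"
    "continuous_on (?L k) (bv_minus (sigma3_reflection M))"
    using bv_sigma3_reflection[OF M] by (auto intro: continuous_on_eq[OF continuous_on_sigma3_conj])
qed

lemma model_solution_sigma3_reflection:
  assumes tau: "Re tau = 0" "Im tau > 0" and D: "0 < D" "D < 1"
    and M: "model_solution n tau D M"
  shows "model_solution n tau D (sigma3_reflection M)"
  unfolding model_solution_def
proof (intro conjI allI ballI)
  fix p assume p: "p \<in> mp_domain tau"
  hence "cnj p \<in> mp_domain tau" "cnj p - tau \<in> mp_domain tau"
    using cut_lines_add_tau_iff[of "cnj p - tau" tau] by (simp_all add: mp_domain_def)
  hence "M (cnj p + 1) = (-1) ^ (n - 1) *\<^sub>R M (cnj p)" "M (cnj p - tau + tau) = M (cnj p - tau)"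
    using model_solution_periodic[OF M] by blast+
  thus "sigma3_reflection M (p + 1) = (-1) ^ (n - 1) *\<^sub>R sigma3_reflection M p"
    "sigma3_reflection M (p + tau) = sigma3_reflection M p"
    using cnj_tau[OF tau(1)] by (simp_all add: sigma3_reflection_def sigma3_conj_scaleR)
next
  fix p assume p: "p \<in> cut_lines tau"
  show "(sigma3_reflection M \<longlongrightarrow> bv_plus (sigma3_reflection M) p) (at p within {q. Im q > Im p})"
    "(sigma3_reflection M \<longlongrightarrow> bv_minus (sigma3_reflection M) p) (at p within {q. Im q < Im p})"
    using boundary_values_sigma3_reflection[OF M p] by (simp_all add: bv_sigma3_reflection[OF M p])
  show "bv_plus (sigma3_reflection M) p = bv_minus (sigma3_reflection M) p ** jump_J"
    using model_solution_boundary[OF M, of "cnj p"] p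
    by (simp add: bv_sigma3_reflection[OF M p] sigma3_conj_mult_jump_J)
qed (use holomorphic_sigma3_reflection[OF tau D M] sigma3_reflection_bounded_at_0[OF M]
    sigma3_reflection_bounded_at_D[OF M] continuous_on_bv_sigma3_reflection[OF M]
    in \<open>simp_all add: regular_points_def\<close>)

lemma bv_plus_add_tau:
  assumes tau: "Re tau = 0" "Im tau > 0" and M: "model_solution n tau D M" and p: "p \<in> cut_lines tau"
  shows "bv_plus M (p + tau) = bv_plus M p"
proof -
  let ?U = "{q. Im q > Im (p + tau)}"
  have "(\<lambda>x. x - tau) ` ?U = {q. Im q > Im p}"
    by (auto simp: image_iff intro!: exI[of _ "x + tau" for x])
  hence "filtermap (\<lambda>x. x - tau) (at (p + tau) within ?U) = at p within {q. Im q > Im p}"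
    using filtermap_diff_at_within[of tau "p + tau" ?U] by simp
  hence "((\<lambda>q. M (q - tau)) \<longlongrightarrow> bv_plus M p) (at (p + tau) within ?U)"
    using model_solution_boundary[OF M p, THEN conjunct1] by (metis filterlim_filtermap)
  moreover have "eventually (\<lambda>q. M (q - tau) = M q) (at (p + tau) within ?U)"
  proof -
    obtain k :: int where k: "Im p = (of_int k + 1/2) * Im tau"
      using p by (auto simp: mem_cut_lines_iff)
    have "M (q - tau) = M q" if "dist q (p + tau) < Im tau / 2" "Im q > Im (p + tau)" for q
    proof -
      have "q - tau \<in> ball p (Im tau / 2)"
        using that(1) by (simp add: dist_norm norm_minus_commute algebra_simps)
      hence "q - tau \<in> mp_domain tau"
        using near_cut_line(3)[OF tau k] that(2) by (simp add: mem_regular_points_iff mp_domain_def)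
      thus ?thesis
        using model_solution_periodic[OF M] by (metis diff_add_cancel)
    qed
    thus ?thesis
      unfolding eventually_at using tau(2) by (intro exI[of _ "Im tau / 2"]) auto
  qed
  ultimately show ?thesis
    by (intro bv_plus_eqI) (simp add: tendsto_cong)
qed

lemma bv_minus_sigma3_symmetric:
  assumes tau: "Re tau = 0" "Im tau > 0" and M: "model_solution n tau D M"
    and symmetric: "\<And>q. q \<in> regular_points tau D \<Longrightarrow> M q = sigma3_reflection M q"
    and p: "p \<in> cut_lines tau"
  shows "bv_minus M p = sigma3_conj (bv_plus M (cnj p))"
proof -
  obtain k :: int where k: "Im p = (of_int k + 1/2) * Im tau"
    using p by (auto simp: mem_cut_lines_iff)
  have "eventually (\<lambda>q. sigma3_reflection M q = M q) (at p within {q. Im q < Im p})"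
    unfolding eventually_at using near_cut_line(2)[OF tau k] symmetric tau(2)
    by (intro exI[of _ "Im tau / 2"]) (auto simp: dist_commute)
  thus ?thesis
    using boundary_values_sigma3_reflection(2)[OF M p] by (intro bv_minus_eqI) (simp add: tendsto_cong)
qed

theorem corollary3p11:
  fixes n :: nat and tau :: complex and D :: real and M :: "complex \<Rightarrow> complex^2^2"
  assumes "n \<ge> 1"
    and "Re tau = 0" and "Im tau > 0"
    and "0 < D" and "D < 1"
    and "model_solution n tau D M"
  shows "(\<forall>p \<in> mp_domain tau - pole_set tau D.
            (\<chi> i j. cnj (M (cnj p) $ i $ j)) = i_sigma3 ** M p ** i_minus_sigma3)
       \<and> (\<forall>p \<in> mp_domain tau - pole_set tau D. cnj (M (cnj p) $ 1 $ 1) = M p $ 1 $ 1)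
       \<and> (\<forall>p. Im p = Im tau / 2 \<longrightarrow>
            bv_plus M p $ 1 $ 2 = bv_minus M p $ 1 $ 1 \<and>
            bv_minus M p $ 1 $ 1 = cnj (bv_plus M p $ 1 $ 1))"
proof -
  have tau: "Re tau = 0" "Im tau > 0" and D: "0 < D" "D < 1" and M: "model_solution n tau D M"
    using assms(2-6) by auto
  have symmetric: "M p = sigma3_reflection M p" if "p \<in> regular_points tau D" for p
    using model_solution_unique[OF tau D M model_solution_sigma3_reflection[OF tau D M] that] .
  have "(\<chi> i j. cnj (M (cnj p) $ i $ j)) = i_sigma3 ** M p ** i_minus_sigma3"
    "cnj (M (cnj p) $ 1 $ 1) = M p $ 1 $ 1" if "p \<in> mp_domain tau - pole_set tau D" for p
    using symmetric[of p] that
    by (simp_all add: regular_points_def sigma3_reflection_def i_sigma3_mult_sigma3_conj)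
  moreover have "bv_plus M p $ 1 $ 2 = bv_minus M p $ 1 $ 1 \<and> bv_minus M p $ 1 $ 1 = cnj (bv_plus M p $ 1 $ 1)"
    if "Im p = Im tau / 2" for p
  proof -
    have p: "p \<in> cut_lines tau"
      using that by (auto simp: mem_cut_lines_iff intro!: exI[of _ 0])
    have "cnj p + tau = p"
      using that tau(1) by (simp add: complex_eq_iff)
    hence "bv_plus M (cnj p) = bv_plus M p"
      using bv_plus_add_tau[OF tau M, of "cnj p"] p by simp
    hence "bv_minus M p = sigma3_conj (bv_plus M p)"
      using bv_minus_sigma3_symmetric[OF tau M symmetric p] by simp
    moreover have "bv_plus M p $ 1 $ 2 = bv_minus M p $ 1 $ 1"
      using model_solution_boundary[OF M p] by simp
    ultimately show ?thesis
      by simp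
  qed
  ultimately show ?thesis
    by blast
qed

end
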